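(* Let $(c_n)_{n\in\mathbb{N}}$ be a sequence of natural numbers and $x=(x_i)_{i\in\mathbb{N}}$ a sequence of real numbers. Let $(\epsilon^1_i)_{i\in\mathbb{N}}$ be i.i.d. uniform on $[-1/2,1/2]$ and, for $\beta_1\in\mathbb{R}$, let $Y^1_i:=\beta_1x_i+\epsilon^1_i$. Suppose one observes $(x_i,\tilde Y_i)_{i\le n}$, where $\tilde Y_1,\dots,\tilde Y_n$ are obtained from $Y^1_1,\dots,Y^1_n$ by (adversarially) perturbing $c_n$ of the values. If there exist $c,o\in(0,1)$ and $\bar n\in\mathbb{N}$ such that for all $n\ge\bar n$ \[ p_n:=\sum_{i=1}^n\min\{1,c|x_i|\}<c_n(1-o), \] then there does not exist a consistent estimator for $\beta_1$ (i.e. no sequence of estimators based on $(x_i,\tilde Y_i)_{i\le n}$ converges in probability to $\beta_1$ for every value of the parameter and every such adversarial perturbation). *)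

theory Defs
  imports "HOL-Probability.Probability"
begin

abbreviation data_space :: "nat \<Rightarrow> (nat \<Rightarrow> real) measure" where
  "data_space n \<equiv> PiM {1..n} (\<lambda>_. borel)"

end

theory Submission
  imports Defs
begin

(* Write wrap t for the representative of t modulo 1 in [-1/2, 1/2). If eps is uniform on
   [-1/2, 1/2], so is wrap (d + eps) for every shift d. Hence an adversary that replaces each
   response delta * x i + eps i by its wrapped value produces data whose law is that of the
   uncorrupted data for beta = 0, and no estimator can tell beta = delta from beta = 0.
   Wrapping changes the i-th response with probability at most min 1 (2 * |delta * x i|), so for
   delta = c / 2 the expected number of changed responses is at most p_n < (1 - o) c_n; by
   Markov's inequality the adversary stays within its budget of c_n corruptions with probability
   greater than o. On that event a consistent estimator would have to be close to both 0 and
   delta. *)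

definition wrap :: "real \<Rightarrow> real" where
  "wrap t = t - of_int (round t)"

lemma borel_measurable_wrap [measurable]: "wrap \<in> borel_measurable borel"
  unfolding wrap_def round_def by measurable

lemma wrap_eq_self: "-1/2 \<le> t \<Longrightarrow> t < 1/2 \<Longrightarrow> wrap t = t"
  by (simp add: wrap_def round_def floor_eq_iff)

lemma wrap_add_of_int: "wrap (t + of_int k) = wrap t"
proof -
  have "\<lfloor>t + of_int k + 1/2\<rfloor> = \<lfloor>t + 1/2\<rfloor> + k"
    using floor_add_int[of "t + 1/2" k] by (simp add: ac_simps)
  then show ?thesis
    by (simp add: wrap_def round_def)
qed

lemma emeasure_lborel_vimage_plus:
  fixes S :: "real set"
  assumes "S \<in> sets borel"
  shows "emeasure lborel ((\<lambda>t. t + a) -` S) = emeasure lborel S"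
proof -
  have "(\<lambda>t. t + a) = (+) a"
    by (simp add: fun_eq_iff)
  then have "emeasure lborel ((\<lambda>t. t + a) -` S) = emeasure (distr lborel borel ((+) a)) S"
    using assms by (simp add: emeasure_distr)
  then show ?thesis
    by (simp add: lborel_distr_plus)
qed

lemma emeasure_lborel_wrap_shift:
  assumes [measurable]: "B \<in> sets borel"
  shows "emeasure lborel ({-1/2..<1/2} \<inter> (\<lambda>t. wrap (d + t)) -` B) = emeasure lborel ({-1/2..<1/2} \<inter> B)"
proof -
  define a where "a = frac d"
  have a: "0 \<le> a" "a < 1"
    by (simp_all add: a_def frac_lt_1)
  have wrap_shift: "wrap (d + t) = wrap (a + t)" for t
    using wrap_add_of_int[of "a + t" "\<lfloor>d\<rfloor>"] by (simp add: a_def frac_def algebra_simps)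
  have wrap_low: "wrap (d + t) = t + a" if "-1/2 \<le> t" "t < 1/2 - a" for t
    using that a by (simp add: wrap_shift wrap_eq_self)
  have wrap_high: "wrap (d + t) = t + (a - 1)" if "1/2 - a \<le> t" "t < 1/2" for t
    using that a wrap_add_of_int[of "a + t" "-1"] by (simp add: wrap_shift wrap_eq_self)
  \<comment> \<open>On \<open>[-1/2, 1/2)\<close>, \<open>t \<mapsto> wrap (d + t)\<close> exchanges two intervals by translations.\<close>
  have "{-1/2..<1/2} \<inter> (\<lambda>t. wrap (d + t)) -` B =
      (\<lambda>t. t + a) -` ({a - 1/2..<1/2} \<inter> B) \<union> (\<lambda>t. t + (a - 1)) -` ({-1/2..<a - 1/2} \<inter> B)"
    (is "_ = ?P \<union> ?Q")
  proof (intro set_eqI iffI)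
    fix t assume "t \<in> {-1/2..<1/2} \<inter> (\<lambda>t. wrap (d + t)) -` B"
    then show "t \<in> ?P \<union> ?Q"
      using wrap_low[of t] wrap_high[of t] by (cases "t < 1/2 - a") auto
  next
    fix t assume "t \<in> ?P \<union> ?Q"
    then show "t \<in> {-1/2..<1/2} \<inter> (\<lambda>t. wrap (d + t)) -` B"
      using a wrap_low[of t] wrap_high[of t] by auto
  qed
  also have "emeasure lborel (?P \<union> ?Q) = emeasure lborel ?P + emeasure lborel ?Q"
    by (intro plus_emeasure[symmetric]) auto
  also have "\<dots> = emeasure lborel ({a - 1/2..<1/2} \<inter> B) + emeasure lborel ({-1/2..<a - 1/2} \<inter> B)"
    by (simp only: emeasure_lborel_vimage_plus sets.Int atLeastLessThan_borel assms)
  also have "\<dots> = emeasure lborel ({a - 1/2..<1/2} \<inter> B \<union> {-1/2..<a - 1/2} \<inter> B)"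
    by (intro plus_emeasure) auto
  also have "{a - 1/2..<1/2} \<inter> B \<union> {-1/2..<a - 1/2} \<inter> B = {-1/2..<1/2} \<inter> B"
    using a by auto
  finally show ?thesis .
qed

lemma distr_uniform_wrap_shift:
  "distr (uniform_measure lborel {-1/2..1/2}) borel (\<lambda>t. wrap (d + t)) = uniform_measure lborel {-1/2..1/2::real}"
  (is "distr ?U borel ?g = ?U")
proof (rule measure_eqI)
  fix B assume "B \<in> sets (distr ?U borel ?g)"
  then have B [measurable]: "B \<in> sets borel"
    by simp
  have gB: "?g -` B \<in> sets borel"
    by (rule measurable_sets_borel[where M=borel]) simp_all
  have Icc_Ico: "emeasure lborel ({-1/2..1/2} \<inter> S) = emeasure lborel ({-1/2..<1/2} \<inter> S)"
    if "S \<in> sets borel" for S :: "real set"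
    using that AE_lborel_singleton[of "1/2::real"] by (intro emeasure_eq_AE) (auto elim!: eventually_mono)
  have "emeasure (distr ?U borel ?g) B = emeasure lborel ({-1/2..1/2} \<inter> ?g -` B)"
    using gB by (simp add: emeasure_distr Int_commute divide_ennreal_def)
  also have "\<dots> = emeasure lborel ({-1/2..<1/2} \<inter> ?g -` B)"
    by (rule Icc_Ico[OF gB])
  also have "\<dots> = emeasure lborel ({-1/2..<1/2} \<inter> B)"
    by (rule emeasure_lborel_wrap_shift[OF B])
  also have "\<dots> = emeasure lborel ({-1/2..1/2} \<inter> B)"
    by (rule Icc_Ico[OF B, symmetric])
  also have "\<dots> = emeasure ?U B"
    by (simp add: Int_commute divide_ennreal_def)
  finally show "emeasure (distr ?U borel ?g) B = emeasure ?U B" .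
qed simp

lemma measure_uniform_wrap_shift_ne:
  "measure (uniform_measure lborel {-1/2..1/2}) {t. wrap (d + t) \<noteq> d + t} \<le> 2 * \<bar>d\<bar>"
proof -
  let ?S = "{t. wrap (d + t) \<noteq> d + t}"
  have [measurable]: "?S \<in> sets borel"
    by measurable
  have "{-1/2..1/2} \<inter> ?S \<subseteq> {-1/2..-1/2 + \<bar>d\<bar>} \<union> {1/2 - \<bar>d\<bar>..1/2}"
  proof
    fix t assume t: "t \<in> {-1/2..1/2} \<inter> ?S"
    then have "\<not> (-1/2 \<le> d + t \<and> d + t < 1/2)"
      using wrap_eq_self by auto
    with t show "t \<in> {-1/2..-1/2 + \<bar>d\<bar>} \<union> {1/2 - \<bar>d\<bar>..1/2}"
      by auto
  qed
  then have "measure lborel ({-1/2..1/2} \<inter> ?S) \<le> measure lborel ({-1/2..-1/2 + \<bar>d\<bar>} \<union> {1/2 - \<bar>d\<bar>..1/2})"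
    by (intro measure_mono_fmeasurable fmeasurable.Un) (auto simp: fmeasurable_def)
  also have "\<dots> \<le> measure lborel {-1/2..-1/2 + \<bar>d\<bar>} + measure lborel {1/2 - \<bar>d\<bar>..1/2::real}"
    by (rule measure_Un_le) auto
  finally show ?thesis
    by simp
qed

lemma borel_measurable_card_Collect:
  assumes "finite I" "\<And>j. j \<in> I \<Longrightarrow> Measurable.pred M (P j)"
  shows "(\<lambda>x. real (card {j \<in> I. P j x})) \<in> borel_measurable M"
proof -
  have "real (card {j \<in> I. P j x}) = (\<Sum>j\<in>I. if P j x then 1 else 0)" for x
    using assms(1) by (simp add: sum.If_cases Int_def)
  then show ?thesis
    using assms by (simp add: borel_measurable_sum)
qed

lemma (in prob_space) prob_card_ge_le:
  assumes "finite I" "\<And>j. j \<in> I \<Longrightarrow> Measurable.pred M (P j)" "0 < k"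
  shows "prob {\<omega> \<in> space M. k \<le> real (card {j \<in> I. P j \<omega>})}
    \<le> (\<Sum>j\<in>I. prob {\<omega> \<in> space M. P j \<omega>}) / k"
proof -
  have count: "real (card {j \<in> I. P j \<omega>}) = (\<Sum>j\<in>I. indicator {\<omega> \<in> space M. P j \<omega>} \<omega>)"
    if "\<omega> \<in> space M" for \<omega>
    using assms(1) that by (simp add: indicator_def sum.If_cases Int_def)
  have events_P: "{\<omega> \<in> space M. P j \<omega>} \<in> events" if "j \<in> I" for j
    using assms(2)[OF that] by measurable
  have "prob {\<omega> \<in> space M. k \<le> real (card {j \<in> I. P j \<omega>})}
      = prob {\<omega> \<in> space M. k \<le> (\<Sum>j\<in>I. indicator {\<omega> \<in> space M. P j \<omega>} \<omega>)}"
    using count by (intro arg_cong[where f=prob]) auto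
  also have "\<dots> \<le> (\<integral>\<omega>. (\<Sum>j\<in>I. indicator {\<omega> \<in> space M. P j \<omega>} \<omega>) \<partial>M) / k"
    using assms(3)
    by (intro integral_Markov_inequality_measure[where A="space M"])
      (auto intro!: sum_nonneg Bochner_Integration.integrable_sum integrable_real_indicator events_P
        simp: less_top[symmetric])
  also have "(\<integral>\<omega>. (\<Sum>j\<in>I. indicator {\<omega> \<in> space M. P j \<omega>} \<omega>) \<partial>M)
      = (\<Sum>j\<in>I. prob {\<omega> \<in> space M. P j \<omega>})"
    by (subst Bochner_Integration.integral_sum)
      (auto intro!: integrable_real_indicator events_P simp: less_top[symmetric] Int_absorb2)
  finally show ?thesis .
qed

lemma (in prob_space) prob_wrap_shift_ne_le:
  assumes [measurable]: "X \<in> borel_measurable M"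
    and uniform: "distr M borel X = uniform_measure lborel {-1/2..1/2}"
  shows "prob {\<omega> \<in> space M. wrap (d + X \<omega>) \<noteq> d + X \<omega>} \<le> min 1 (2 * \<bar>d\<bar>)"
proof -
  have "prob {\<omega> \<in> space M. wrap (d + X \<omega>) \<noteq> d + X \<omega>}
      = measure (distr M borel X) {t. wrap (d + t) \<noteq> d + t}"
    by (subst measure_distr) (auto intro!: arg_cong[where f=prob])
  then have "prob {\<omega> \<in> space M. wrap (d + X \<omega>) \<noteq> d + X \<omega>} \<le> 2 * \<bar>d\<bar>"
    using measure_uniform_wrap_shift_ne[of d] uniform by (simp del: measure_uniform_measure)
  then show ?thesis
    by simp
qed

lemma (in prob_space) prob_card_wrap_shift_lt:
  assumes "finite I" and [measurable]: "\<And>j. X j \<in> borel_measurable M"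
    and uniform: "\<And>j. j \<in> I \<Longrightarrow> distr M borel (X j) = uniform_measure lborel {-1/2..1/2}"
    and "0 \<le> k" and budget: "(\<Sum>j\<in>I. min 1 (2 * \<bar>d j\<bar>)) < k * (1 - p)"
  shows "p < prob {\<omega> \<in> space M. real (card {j \<in> I. wrap (d j + X j \<omega>) \<noteq> d j + X j \<omega>}) < k}"
proof -
  let ?P = "\<lambda>j \<omega>. wrap (d j + X j \<omega>) \<noteq> d j + X j \<omega>"
  have [measurable]: "(\<lambda>\<omega>. real (card {j \<in> I. ?P j \<omega>})) \<in> borel_measurable M"
    using \<open>finite I\<close> by (rule borel_measurable_card_Collect) measurable
  have "0 \<le> (\<Sum>j\<in>I. min 1 (2 * \<bar>d j\<bar>))"
    by (intro sum_nonneg) simp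
  with budget \<open>0 \<le> k\<close> have "0 < k"
    by (cases "k = 0") auto
  have "prob {\<omega> \<in> space M. k \<le> real (card {j \<in> I. ?P j \<omega>})}
      \<le> (\<Sum>j\<in>I. prob {\<omega> \<in> space M. ?P j \<omega>}) / k"
    using \<open>finite I\<close> _ \<open>0 < k\<close> by (rule prob_card_ge_le) measurable
  also have "\<dots> \<le> (\<Sum>j\<in>I. min 1 (2 * \<bar>d j\<bar>)) / k"
    using \<open>0 < k\<close> uniform by (intro divide_right_mono sum_mono prob_wrap_shift_ne_le) auto
  also have "\<dots> < 1 - p"
    using divide_strict_right_mono[OF budget \<open>0 < k\<close>] \<open>0 < k\<close> by simp
  finally have "prob {\<omega> \<in> space M. k \<le> real (card {j \<in> I. ?P j \<omega>})} < 1 - p" .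
  moreover have "prob {\<omega> \<in> space M. real (card {j \<in> I. ?P j \<omega>}) < k}
      = 1 - prob {\<omega> \<in> space M. k \<le> real (card {j \<in> I. ?P j \<omega>})}"
    by (subst prob_compl[symmetric]) (auto intro!: arg_cong[where f=prob])
  ultimately show ?thesis
    by linarith
qed

lemma (in prob_space) distr_restrict_compose_indep_vars:
  assumes indep: "indep_vars N X I"
    and f: "\<And>i. i \<in> I \<Longrightarrow> f i \<in> N i \<rightarrow>\<^sub>M N i"
    and law: "\<And>i. i \<in> I \<Longrightarrow> distr M (N i) (\<lambda>\<omega>. f i (X i \<omega>)) = distr M (N i) (X i)"
  shows "distr M (\<Pi>\<^sub>M i\<in>I. N i) (\<lambda>\<omega>. \<lambda>i\<in>I. f i (X i \<omega>))
    = distr M (\<Pi>\<^sub>M i\<in>I. N i) (\<lambda>\<omega>. \<lambda>i\<in>I. X i \<omega>)"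
proof (cases "I = {}")
  case False
  have X: "X i \<in> M \<rightarrow>\<^sub>M N i" if "i \<in> I" for i
    using indep that by (simp add: indep_vars_def)
  have indep_f: "indep_vars N (\<lambda>i \<omega>. f i (X i \<omega>)) I"
    using indep f by (rule indep_vars_compose2)
  have fX: "(\<lambda>\<omega>. f i (X i \<omega>)) \<in> M \<rightarrow>\<^sub>M N i" if "i \<in> I" for i
    by (rule measurable_compose[OF X[OF that] f[OF that]])
  have "distr M (\<Pi>\<^sub>M i\<in>I. N i) (\<lambda>\<omega>. \<lambda>i\<in>I. f i (X i \<omega>))
      = (\<Pi>\<^sub>M i\<in>I. distr M (N i) (\<lambda>\<omega>. f i (X i \<omega>)))"
    using indep_vars_iff_distr_eq_PiM'[OF False fX] indep_f by simp
  also have "\<dots> = (\<Pi>\<^sub>M i\<in>I. distr M (N i) (X i))"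
    using law by (rule PiM_cong[OF refl])
  also have "\<dots> = distr M (\<Pi>\<^sub>M i\<in>I. N i) (\<lambda>\<omega>. \<lambda>i\<in>I. X i \<omega>)"
    using indep_vars_iff_distr_eq_PiM'[OF False X] indep by simp
  finally show ?thesis .
qed (simp add: restrict_def)

lemma (in prob_space) prob_agreement_tendsto_zero:
  fixes T :: "nat \<Rightarrow> 'b \<Rightarrow> real"
  assumes [measurable]: "\<And>n. T n \<in> borel_measurable (N n)"
    "\<And>n. U n \<in> M \<rightarrow>\<^sub>M N n" "\<And>n. V n \<in> M \<rightarrow>\<^sub>M N n" "\<And>n. W n \<in> M \<rightarrow>\<^sub>M N n"
    and same_law: "\<And>n. distr M (N n) (V n) = distr M (N n) (U n)"
    and consistent_U: "(\<lambda>n. prob {\<omega> \<in> space M. \<bar>T n (U n \<omega>) - a\<bar> > e}) \<longlonglongrightarrow> 0"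
    and consistent_W: "(\<lambda>n. prob {\<omega> \<in> space M. \<bar>T n (W n \<omega>) - b\<bar> > e}) \<longlonglongrightarrow> 0"
    and separated: "2 * e < \<bar>a - b\<bar>"
    and G [measurable]: "\<And>n. G n \<in> events"
    and agree: "\<And>n \<omega>. \<omega> \<in> G n \<Longrightarrow> V n \<omega> = W n \<omega>"
  shows "(\<lambda>n. prob (G n)) \<longlonglongrightarrow> 0"
proof (rule tendsto_sandwich[OF _ _ tendsto_const tendsto_add_zero[OF consistent_U consistent_W]])
  have "prob {\<omega> \<in> space M. \<bar>T n (V n \<omega>) - a\<bar> > e}
      = prob {\<omega> \<in> space M. \<bar>T n (U n \<omega>) - a\<bar> > e}" for n
  proof -
    let ?S = "{y \<in> space (N n). \<bar>T n y - a\<bar> > e}"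
    have [measurable]: "?S \<in> sets (N n)"
      by measurable
    have "prob {\<omega> \<in> space M. \<bar>T n (V n \<omega>) - a\<bar> > e} = prob (V n -` ?S \<inter> space M)"
      using measurable_space[of "V n" M "N n"] by (intro arg_cong[where f=prob]) auto
    also have "\<dots> = measure (distr M (N n) (V n)) ?S"
      by (rule measure_distr[symmetric]) simp_all
    also have "\<dots> = prob (U n -` ?S \<inter> space M)"
      unfolding same_law by (rule measure_distr) simp_all
    also have "\<dots> = prob {\<omega> \<in> space M. \<bar>T n (U n \<omega>) - a\<bar> > e}"
      using measurable_space[of "U n" M "N n"] by (intro arg_cong[where f=prob]) auto
    finally show ?thesis .
  qed
  moreover have "prob (G n) \<le> prob {\<omega> \<in> space M. \<bar>T n (V n \<omega>) - a\<bar> > e}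
      + prob {\<omega> \<in> space M. \<bar>T n (W n \<omega>) - b\<bar> > e}" for n
  proof -
    have "G n \<subseteq> {\<omega> \<in> space M. \<bar>T n (V n \<omega>) - a\<bar> > e}
        \<union> {\<omega> \<in> space M. \<bar>T n (W n \<omega>) - b\<bar> > e}"
    proof
      fix \<omega> assume "\<omega> \<in> G n"
      moreover have "e < \<bar>T n (V n \<omega>) - a\<bar> \<or> e < \<bar>T n (V n \<omega>) - b\<bar>"
        using separated by linarith
      ultimately show "\<omega> \<in> {\<omega> \<in> space M. \<bar>T n (V n \<omega>) - a\<bar> > e}
          \<union> {\<omega> \<in> space M. \<bar>T n (W n \<omega>) - b\<bar> > e}"
        using sets.sets_into_space[OF G] agree by auto
    qed
    then show ?thesis
      by (intro order.trans[OF finite_measure_mono measure_Un_le]) auto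
  qed
  ultimately show "\<forall>\<^sub>F n in sequentially. prob (G n) \<le> prob {\<omega> \<in> space M. \<bar>T n (U n \<omega>) - a\<bar> > e}
      + prob {\<omega> \<in> space M. \<bar>T n (W n \<omega>) - b\<bar> > e}"
    by simp
qed simp

definition wrap_corruption :: "nat \<Rightarrow> nat \<Rightarrow> (nat \<Rightarrow> real) \<Rightarrow> nat \<Rightarrow> real" where
  "wrap_corruption k n y =
    (\<lambda>i\<in>{1..n}. if card {j \<in> {1..n}. wrap (y j) \<noteq> y j} \<le> k then wrap (y i) else y i)"

lemma measurable_wrap_corruption [measurable]:
  "wrap_corruption k n \<in> data_space n \<rightarrow>\<^sub>M data_space n"
proof -
  have [measurable]: "(\<lambda>y. real (card {j \<in> {1..n}. wrap (y j) \<noteq> y j})) \<in> borel_measurable (data_space n)"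
    by (rule borel_measurable_card_Collect) measurable
  have "wrap_corruption k n = (\<lambda>y. \<lambda>i\<in>{1..n}.
      if real (card {j \<in> {1..n}. wrap (y j) \<noteq> y j}) \<le> real k then wrap (y i) else y i)"
    by (simp add: wrap_corruption_def fun_eq_iff)
  then show ?thesis
    by simp
qed

lemma card_wrap_corruption_ne_le: "card {i \<in> {1..n}. wrap_corruption k n y i \<noteq> y i} \<le> k"
proof (cases "card {j \<in> {1..n}. wrap (y j) \<noteq> y j} \<le> k")
  case True
  then have "{i \<in> {1..n}. wrap_corruption k n y i \<noteq> y i} = {j \<in> {1..n}. wrap (y j) \<noteq> y j}"
    by (auto simp: wrap_corruption_def)
  with True show ?thesis
    by simp
next
  case False
  then have "{i \<in> {1..n}. wrap_corruption k n y i \<noteq> y i} = {}"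
    by (simp add: wrap_corruption_def)
  then show ?thesis
    by (metis card.empty le0)
qed

lemma wrap_corruption_eq:
  "card {j \<in> {1..n}. wrap (y j) \<noteq> y j} \<le> k \<Longrightarrow> wrap_corruption k n y = (\<lambda>i\<in>{1..n}. wrap (y i))"
  by (simp add: wrap_corruption_def)

lemma (in prob_space) distr_wrap_shift_uniform_indep:
  assumes indep: "indep_vars (\<lambda>_. borel) X I"
    and uniform: "\<And>i. i \<in> I \<Longrightarrow> distr M borel (X i) = uniform_measure lborel {-1/2..1/2}"
  shows "distr M (\<Pi>\<^sub>M i\<in>I. borel) (\<lambda>\<omega>. \<lambda>i\<in>I. wrap (d i + X i \<omega>))
    = distr M (\<Pi>\<^sub>M i\<in>I. borel) (\<lambda>\<omega>. \<lambda>i\<in>I. X i \<omega>)"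
proof (rule distr_restrict_compose_indep_vars[OF indep])
  fix i assume "i \<in> I"
  then have [measurable]: "X i \<in> borel_measurable M"
    using indep by (simp add: indep_vars_def)
  have "distr M borel (\<lambda>\<omega>. wrap (d i + X i \<omega>)) = distr (distr M borel (X i)) borel (\<lambda>t. wrap (d i + t))"
    by (simp add: distr_distr comp_def)
  also have "\<dots> = distr M borel (X i)"
    using \<open>i \<in> I\<close> by (simp only: uniform distr_uniform_wrap_shift)
  finally show "distr M borel (\<lambda>\<omega>. wrap (d i + X i \<omega>)) = distr M borel (X i)" .
qed simp

definition consistent_under_corruption ::
  "'a measure \<Rightarrow> (nat \<Rightarrow> 'a \<Rightarrow> real) \<Rightarrow> (nat \<Rightarrow> real) \<Rightarrow> (nat \<Rightarrow> nat) \<Rightarrow>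
    (nat \<Rightarrow> (nat \<Rightarrow> real) \<Rightarrow> real) \<Rightarrow> bool"
where
  "consistent_under_corruption M eps x cn T \<longleftrightarrow>
    (\<forall>\<beta>::real. \<forall>A :: nat \<Rightarrow> (nat \<Rightarrow> real) \<Rightarrow> (nat \<Rightarrow> real).
       (\<forall>n. A n \<in> data_space n \<rightarrow>\<^sub>M data_space n \<and>
            (\<forall>y \<in> space (data_space n). card {i \<in> {1..n}. A n y i \<noteq> y i} \<le> cn n))
       \<longrightarrow> (\<forall>e>0. (\<lambda>n. measure M {\<omega> \<in> space M.
                \<bar>T n (A n (\<lambda>i\<in>{1..n}. \<beta> * x i + eps i \<omega>)) - \<beta>\<bar> > e}) \<longlonglongrightarrow> 0))"

lemma consistent_under_corruptionD:
  assumes "consistent_under_corruption M eps x cn T"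
    and "\<And>n. A n \<in> data_space n \<rightarrow>\<^sub>M data_space n"
    and "\<And>n y. card {i \<in> {1..n}. A n y i \<noteq> y i} \<le> cn n"
    and "0 < e"
  shows "(\<lambda>n. measure M {\<omega> \<in> space M. \<bar>T n (A n (\<lambda>i\<in>{1..n}. \<beta> * x i + eps i \<omega>)) - \<beta>\<bar> > e}) \<longlonglongrightarrow> 0"
  using assms unfolding consistent_under_corruption_def by blast

lemma prob_few_wraps_tendsto_zero:
  assumes "prob_space M" and indep: "prob_space.indep_vars M (\<lambda>_. borel) eps UNIV"
    and uniform: "\<And>i. distr M borel (eps i) = uniform_measure lborel {-1/2..1/2}"
    and [measurable]: "\<And>n. T n \<in> borel_measurable (data_space n)"
    and consistent: "consistent_under_corruption M eps x cn T"
    and "\<delta> \<noteq> 0"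
  shows "(\<lambda>n. measure M {\<omega> \<in> space M.
    real (card {j \<in> {1..n}. wrap (\<delta> * x j + eps j \<omega>) \<noteq> \<delta> * x j + eps j \<omega>}) < real (cn n)}) \<longlonglongrightarrow> 0"
    (is "(\<lambda>n. measure M (?G n)) \<longlonglongrightarrow> 0")
proof -
  interpret prob_space M by fact
  have [measurable]: "eps i \<in> borel_measurable M" for i
    using indep by (simp add: indep_vars_def)
  define e where "e = \<bar>\<delta>\<bar> / 4"
  have "0 < e" and separated: "2 * e < \<bar>0 - \<delta>\<bar>"
    using \<open>\<delta> \<noteq> 0\<close> by (simp_all add: e_def)
  have G_events: "?G n \<in> events" for n
  proof -
    have "(\<lambda>\<omega>. real (card {j \<in> {1..n}. wrap (\<delta> * x j + eps j \<omega>) \<noteq> \<delta> * x j + eps j \<omega>}))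
        \<in> borel_measurable M"
      by (rule borel_measurable_card_Collect) measurable
    then show ?thesis
      by measurable
  qed
  have same_law: "distr M (data_space n) (\<lambda>\<omega>. \<lambda>i\<in>{1..n}. wrap (\<delta> * x i + eps i \<omega>))
      = distr M (data_space n) (\<lambda>\<omega>. \<lambda>i\<in>{1..n}. eps i \<omega>)" for n
    using indep_vars_subset[OF indep] uniform by (intro distr_wrap_shift_uniform_indep) auto
  have consistent_0: "(\<lambda>n. prob {\<omega> \<in> space M. \<bar>T n (\<lambda>i\<in>{1..n}. eps i \<omega>) - 0\<bar> > e}) \<longlonglongrightarrow> 0"
    using consistent_under_corruptionD[OF consistent, of "\<lambda>n y. y" e 0] \<open>0 < e\<close> by simp
  have consistent_\<delta>: "(\<lambda>n. prob {\<omega> \<in> space M.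
      \<bar>T n (wrap_corruption (cn n) n (\<lambda>i\<in>{1..n}. \<delta> * x i + eps i \<omega>)) - \<delta>\<bar> > e}) \<longlonglongrightarrow> 0"
    using \<open>0 < e\<close>
    by (intro consistent_under_corruptionD[OF consistent measurable_wrap_corruption card_wrap_corruption_ne_le])
  have agree: "(\<lambda>i\<in>{1..n}. wrap (\<delta> * x i + eps i \<omega>))
      = wrap_corruption (cn n) n (\<lambda>i\<in>{1..n}. \<delta> * x i + eps i \<omega>)"
    if "\<omega> \<in> ?G n" for n \<omega>
  proof -
    let ?Y = "\<lambda>i\<in>{1..n}. \<delta> * x i + eps i \<omega>"
    have "card {j \<in> {1..n}. wrap (?Y j) \<noteq> ?Y j} \<le> cn n"
      using that by (simp cong: conj_cong)
    then have "wrap_corruption (cn n) n ?Y = (\<lambda>i\<in>{1..n}. wrap (?Y i))"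
      by (rule wrap_corruption_eq)
    then show ?thesis
      by (auto intro!: restrict_ext)
  qed
  show ?thesis
    by (rule prob_agreement_tendsto_zero[OF _ _ _ _ same_law consistent_0 consistent_\<delta> separated
          G_events agree])
      measurable
qed

theorem theoremE1:
  fixes cn :: "nat \<Rightarrow> nat" and x :: "nat \<Rightarrow> real"
    and M :: "'a measure" and eps :: "nat \<Rightarrow> 'a \<Rightarrow> real"
    and c ov :: real and nbar :: nat
  assumes "prob_space M"
    and "prob_space.indep_vars M (\<lambda>_. borel) eps UNIV"
    and "\<And>i. distr M borel (eps i) = uniform_measure lborel {-1/2..1/2}"
    and "0 < c" "c < 1" "0 < ov" "ov < 1"
    and "\<forall>n\<ge>nbar. (\<Sum>i=1..n. min 1 (c * \<bar>x i\<bar>)) < real (cn n) * (1 - ov)"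
  shows "\<not> (\<exists>T :: nat \<Rightarrow> (nat \<Rightarrow> real) \<Rightarrow> real.
            (\<forall>n. T n \<in> borel_measurable (data_space n)) \<and>
            (\<forall>\<beta>::real. \<forall>A :: nat \<Rightarrow> (nat \<Rightarrow> real) \<Rightarrow> (nat \<Rightarrow> real).
               (\<forall>n. A n \<in> data_space n \<rightarrow>\<^sub>M data_space n \<and>
                    (\<forall>y \<in> space (data_space n). card {i \<in> {1..n}. A n y i \<noteq> y i} \<le> cn n))
               \<longrightarrow> (\<forall>e>0. (\<lambda>n. measure M {\<omega> \<in> space M.
                        \<bar>T n (A n (\<lambda>i\<in>{1..n}. \<beta> * x i + eps i \<omega>)) - \<beta>\<bar> > e})
                      \<longlonglongrightarrow> 0)))"
  unfolding consistent_under_corruption_def[symmetric]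
proof (intro notI, elim exE conjE)
  fix T
  assume T: "\<forall>n. T n \<in> borel_measurable (data_space n)"
    and consistent: "consistent_under_corruption M eps x cn T"
  interpret prob_space M by fact
  have eps_measurable: "eps i \<in> borel_measurable M" for i
    using assms(2) by (simp add: indep_vars_def)
  let ?G = "\<lambda>n. {\<omega> \<in> space M.
    real (card {j \<in> {1..n}. wrap (c / 2 * x j + eps j \<omega>) \<noteq> c / 2 * x j + eps j \<omega>}) < real (cn n)}"
  have G_small: "(\<lambda>n. prob (?G n)) \<longlonglongrightarrow> 0"
    using assms(1-4) T consistent by (intro prob_few_wraps_tendsto_zero) auto
  obtain N where G_small_from: "\<And>n. N \<le> n \<Longrightarrow> prob (?G n) < ov"
    using order_tendstoD(2)[OF G_small \<open>0 < ov\<close>] unfolding eventually_sequentially by blast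
  have G_large: "ov < prob (?G n)" if "nbar \<le> n" for n
  proof (rule prob_card_wrap_shift_lt)
    show "(\<Sum>j\<in>{1..n}. min 1 (2 * \<bar>c / 2 * x j\<bar>)) < real (cn n) * (1 - ov)"
      using assms(4,8) that by (simp add: abs_mult)
  qed (simp_all add: eps_measurable assms(3))
  show False
    using G_large[of "max N nbar"] G_small_from[of "max N nbar"] by simp
qed

end
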